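(* Suppose $\operatorname{tr}\big((I-\widehat\Pi)\Pi^*\big)\le\delta^2$ for some $\delta\in[0,1)$. Then for every $x\in\mathbb R^d$, $$|\Pi^*x|\le|\widehat\Pi^{1/2}x|+\delta|x|.$$
   Context: $\Pi^*$ is the orthogonal projector onto an $m^*$-dimensional subspace of $\mathbb R^d$. $I$ is the $d\times d$ identity, $|\cdot|$ the Euclidean norm, $A\preceq B$ means $B-A$ is positive semidefinite. Let $\hat\beta_1,\dots,\hat\beta_L\in\mathbb R^d$ be arbitrary vectors, $\mathcal A_{m^*}=\{\Pi\in\mathbb R^{d\times d}:\Pi=\Pi^\top,\ 0\preceq\Pi\preceq I,\ \operatorname{tr}\Pi\le m^*\}$, and let $\widehat\Pi$ be a minimizer over $\Pi\in\mathcal A_{m^*}$ of $\max_\ell\hat\beta_\ell^\top(I-\Pi)\hat\beta_\ell$; $\widehat\Pi^{1/2}$ is its positive semidefinite square root. *)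

theory Defs
  imports "HOL-Analysis.Analysis"
begin

definition psd :: "real^'n^'n \<Rightarrow> bool" where
  "psd A \<longleftrightarrow> transpose A = A \<and> (\<forall>x. 0 \<le> x \<bullet> (A *v x))"

definition loewner_le :: "real^'n^'n \<Rightarrow> real^'n^'n \<Rightarrow> bool" where
  "loewner_le A B \<longleftrightarrow> psd (B - A)"

definition orth_projector :: "real^'n^'n \<Rightarrow> nat \<Rightarrow> bool" where
  "orth_projector P m \<longleftrightarrow> transpose P = P \<and> P ** P = P \<and> rank P = m"

definition feasible_set :: "nat \<Rightarrow> (real^'n^'n) set" where
  "feasible_set m = {P. transpose P = P \<and> loewner_le 0 P \<and> loewner_le P (mat 1) \<and> trace P \<le> real m}"

definition objective :: "nat \<Rightarrow> (nat \<Rightarrow> real^'n) \<Rightarrow> real^'n^'n \<Rightarrow> real" where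
  "objective L \<beta> P = Max ((\<lambda>l. \<beta> l \<bullet> ((mat 1 - P) *v \<beta> l)) ` {1..L})"

end

theory Submission
  imports Defs
begin

(* Write P = \<Pi>*, Q = I - \<Pi>hat and S = \<Pi>hat^(1/2), so that P x = P S (S x) + P Q x. Both P and S
   are contractions, hence |P S (S x)| \<le> |S x|. For u = P Q x we have P u = u, and Cauchy-Schwarz
   for the semidefinite form of Q gives |u|^4 = (u'Q x)^2 \<le> (u'P Q P u)(x'Q x). A positive
   semidefinite M satisfies y'M y \<le> |y|^2 tr M; with tr (P Q P) = tr (Q P) \<le> \<delta>^2 and
   x'Q x \<le> |x|^2 this yields |u| \<le> \<delta> |x|. *)

lemma symmetric_matrix_inner_adjoint:
  fixes A :: "real^'n^'n"
  assumes "transpose A = A"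
  shows "(A *v x) \<bullet> y = x \<bullet> (A *v y)"
  by (metis assms dot_lmul_matrix vector_transpose_matrix)

lemma nonneg_quadratic_discriminant:
  fixes a b c :: real
  assumes "\<And>t. 0 \<le> a + 2 * t * b + t\<^sup>2 * c" and "0 \<le> c"
  shows "b\<^sup>2 \<le> a * c"
proof (cases "c = 0")
  case True
  show ?thesis
  proof (cases "b = 0")
    case False
    have "0 \<le> a + 2 * (-(a + 1) / (2 * b)) * b + (-(a + 1) / (2 * b))\<^sup>2 * c"
      by (fact assms(1))
    then show ?thesis using False True by (simp add: field_simps)
  qed (simp add: True)
next
  case False
  then have "c > 0" using assms(2) by simp
  moreover have "0 \<le> a + 2 * (-b / c) * b + (-b / c)\<^sup>2 * c" by (fact assms(1))
  ultimately show ?thesis by (simp add: field_simps power2_eq_square)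
qed

lemma psd_Cauchy_Schwarz:
  fixes M :: "real^'n^'n"
  assumes "psd M"
  shows "(u \<bullet> (M *v v))\<^sup>2 \<le> (u \<bullet> (M *v u)) * (v \<bullet> (M *v v))"
proof (rule nonneg_quadratic_discriminant)
  have sym: "transpose M = M" and pos: "\<And>x. 0 \<le> x \<bullet> (M *v x)"
    using assms unfolding psd_def by auto
  have "v \<bullet> (M *v u) = u \<bullet> (M *v v)"
    using symmetric_matrix_inner_adjoint[OF sym, of v u] by (simp add: inner_commute)
  then have "(u + t *\<^sub>R v) \<bullet> (M *v (u + t *\<^sub>R v))
      = u \<bullet> (M *v u) + 2 * t * (u \<bullet> (M *v v)) + t\<^sup>2 * (v \<bullet> (M *v v))" for t
    by (simp add: matrix_vector_right_distrib matrix_vector_mult_scaleR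
        inner_add_left inner_add_right power2_eq_square algebra_simps)
  then show "0 \<le> u \<bullet> (M *v u) + 2 * t * (u \<bullet> (M *v v)) + t\<^sup>2 * (v \<bullet> (M *v v))" for t
    by (metis pos)
  show "0 \<le> v \<bullet> (M *v v)" by (fact pos)
qed

lemma psd_diagonal_nonneg:
  fixes M :: "real^'n^'n"
  assumes "psd M"
  shows "0 \<le> M $ i $ i"
proof -
  have "0 \<le> axis i 1 \<bullet> (M *v axis i 1)" using assms unfolding psd_def by blast
  then show ?thesis by (simp add: inner_axis' matrix_vector_mult_basis column_def)
qed

lemma psd_component_sq_le:
  fixes M :: "real^'n^'n"
  assumes "psd M"
  shows "((M *v y) $ i)\<^sup>2 \<le> M $ i $ i * (y \<bullet> (M *v y))"
  using psd_Cauchy_Schwarz[OF assms, of "axis i 1" y]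
  by (simp add: inner_axis' matrix_vector_mult_basis column_def)

lemma psd_trace_nonneg:
  fixes M :: "real^'n^'n"
  assumes "psd M"
  shows "0 \<le> trace M"
  unfolding trace_def by (intro sum_nonneg psd_diagonal_nonneg[OF assms])

lemma le_square_if_le_sqrt_mult:
  fixes q T :: real
  assumes "q \<le> sqrt q * T" and "0 \<le> q"
  shows "q \<le> T\<^sup>2"
proof (cases "q = 0")
  case False
  with assms have "sqrt q * sqrt q \<le> sqrt q * T" and "0 < sqrt q" by simp_all
  then have "sqrt q \<le> T" by (rule mult_left_le_imp_le)
  then have "(sqrt q)\<^sup>2 \<le> T\<^sup>2" by (rule power_mono) (simp add: assms(2))
  with assms(2) show ?thesis by simp
qed simp

lemma psd_quadratic_form_le_trace:
  fixes M :: "real^'n^'n"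
  assumes "psd M"
  shows "y \<bullet> (M *v y) \<le> (norm y)\<^sup>2 * trace M"
proof -
  define q where "q = y \<bullet> (M *v y)"
  have "0 \<le> q" using assms unfolding psd_def q_def by blast
  have diag: "0 \<le> M $ i $ i" for i by (rule psd_diagonal_nonneg[OF assms])
  define T where "T = (\<Sum>i\<in>UNIV. \<bar>y $ i\<bar> * sqrt (M $ i $ i))"
  have "q = (\<Sum>i\<in>UNIV. y $ i * (M *v y) $ i)" unfolding q_def inner_vec_def by simp
  also have "\<dots> \<le> (\<Sum>i\<in>UNIV. \<bar>y $ i\<bar> * (sqrt (M $ i $ i) * sqrt q))"
  proof (rule sum_mono)
    fix i
    have "\<bar>(M *v y) $ i\<bar> \<le> sqrt (M $ i $ i) * sqrt q"
      using real_sqrt_le_mono[OF psd_component_sq_le[OF assms, of y i]]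
      by (simp add: real_sqrt_mult q_def)
    then have "\<bar>y $ i\<bar> * \<bar>(M *v y) $ i\<bar> \<le> \<bar>y $ i\<bar> * (sqrt (M $ i $ i) * sqrt q)"
      by (simp add: mult_left_mono)
    then show "y $ i * (M *v y) $ i \<le> \<bar>y $ i\<bar> * (sqrt (M $ i $ i) * sqrt q)"
      by (simp add: abs_mult[symmetric])
  qed
  also have "\<dots> = sqrt q * T" unfolding T_def by (simp add: sum_distrib_left algebra_simps)
  finally have "q \<le> sqrt q * T" .
  then have "q \<le> T\<^sup>2" using \<open>0 \<le> q\<close> by (rule le_square_if_le_sqrt_mult)
  also have "T\<^sup>2 \<le> (\<Sum>i\<in>UNIV. \<bar>y $ i\<bar>\<^sup>2) * (\<Sum>i\<in>UNIV. (sqrt (M $ i $ i))\<^sup>2)"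
    unfolding T_def by (rule Cauchy_Schwarz_ineq_sum)
  also have "\<dots> = (y \<bullet> y) * trace M"
    using diag by (simp add: trace_def inner_vec_def power2_eq_square)
  finally show ?thesis unfolding q_def by (simp add: power2_norm_eq_inner)
qed

lemma psd_congruence:
  fixes Q A :: "real^'n^'n"
  assumes "psd Q"
  shows "psd (transpose A ** Q ** A)"
proof -
  have "x \<bullet> ((transpose A ** Q ** A) *v x) = (A *v x) \<bullet> (Q *v (A *v x))" for x
    by (metis dot_lmul_matrix vector_transpose_matrix matrix_vector_mul_assoc)
  then show ?thesis
    using assms by (simp add: psd_def matrix_transpose_mul matrix_mul_assoc)
qed

lemma loewner_le_id_imp_quadratic_form_le:
  fixes A :: "real^'n^'n"
  assumes "loewner_le A (mat 1)"
  shows "x \<bullet> (A *v x) \<le> (norm x)\<^sup>2"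
proof -
  have "0 \<le> x \<bullet> ((mat 1 - A) *v x)" using assms unfolding loewner_le_def psd_def by blast
  then show ?thesis
    by (simp add: matrix_vector_mult_diff_rdistrib inner_diff_right power2_norm_eq_inner)
qed

lemma norm_symmetric_matrix_le_if_square_loewner_le_id:
  fixes S :: "real^'n^'n"
  assumes "transpose S = S" and "loewner_le (S ** S) (mat 1)"
  shows "norm (S *v w) \<le> norm w"
proof -
  have "(norm (S *v w))\<^sup>2 = w \<bullet> ((S ** S) *v w)"
    using symmetric_matrix_inner_adjoint[OF assms(1), of w "S *v w"]
    by (simp add: power2_norm_eq_inner matrix_vector_mul_assoc)
  also have "\<dots> \<le> (norm w)\<^sup>2" using assms(2) by (rule loewner_le_id_imp_quadratic_form_le)
  finally show ?thesis by (rule power2_le_imp_le) simp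
qed

lemma norm_symmetric_idempotent_matrix_le:
  fixes P :: "real^'n^'n"
  assumes "transpose P = P" and "P ** P = P"
  shows "norm (P *v v) \<le> norm v"
proof -
  have "norm (P *v v) * norm (P *v v) = v \<bullet> (P *v v)"
    using symmetric_matrix_inner_adjoint[OF assms(1), of v "P *v v"] assms(2)
    by (simp add: matrix_vector_mul_assoc inner_commute power2_norm_eq_inner[symmetric]
        power2_eq_square)
  also have "\<dots> \<le> norm v * norm (P *v v)" by (rule norm_cauchy_schwarz)
  finally show ?thesis by (cases "P *v v = 0") simp_all
qed

lemma trace_symmetric_idempotent_congruence:
  fixes P Q :: "real^'n^'n"
  assumes "transpose P = P" and "P ** P = P"
  shows "trace (transpose P ** Q ** P) = trace (Q ** P)"
  by (metis assms trace_mul_sym matrix_mul_assoc)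

lemma psd_quadratic_form_on_range_le_trace:
  fixes P Q :: "real^'n^'n"
  assumes P_sym: "transpose P = P" and P_idem: "P ** P = P" and "psd Q" and Pu: "P *v u = u"
  shows "u \<bullet> (Q *v u) \<le> (norm u)\<^sup>2 * trace (Q ** P)"
proof -
  have "(transpose P ** Q ** P) *v u = P *v (Q *v u)"
    by (simp add: P_sym Pu flip: matrix_vector_mul_assoc)
  then have "u \<bullet> (Q *v u) = u \<bullet> ((transpose P ** Q ** P) *v u)"
    using symmetric_matrix_inner_adjoint[OF P_sym, of u "Q *v u"] Pu by simp
  also have "\<dots> \<le> (norm u)\<^sup>2 * trace (transpose P ** Q ** P)"
    using psd_congruence[OF \<open>psd Q\<close>] by (rule psd_quadratic_form_le_trace)
  finally show ?thesis by (simp only: trace_symmetric_idempotent_congruence[OF P_sym P_idem])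
qed

lemma norm_projector_psd_sq_le_trace:
  fixes P Q :: "real^'n^'n"
  assumes P_sym: "transpose P = P" and P_idem: "P ** P = P" and "psd Q"
  shows "(norm (P *v (Q *v x)))\<^sup>2 \<le> trace (Q ** P) * (x \<bullet> (Q *v x))"
proof -
  define u where "u = P *v (Q *v x)"
  have "P *v (P *v y) = P *v y" for y by (simp add: matrix_vector_mul_assoc P_idem)
  then have Pu: "P *v u = u" unfolding u_def .
  have "(norm u)\<^sup>2 = u \<bullet> (Q *v x)"
    using symmetric_matrix_inner_adjoint[OF P_sym, of "Q *v x" u]
    by (simp add: Pu power2_norm_eq_inner inner_commute u_def[symmetric])
  then have "((norm u)\<^sup>2)\<^sup>2 \<le> (u \<bullet> (Q *v u)) * (x \<bullet> (Q *v x))"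
    using psd_Cauchy_Schwarz[OF \<open>psd Q\<close>] by simp
  moreover have form_x: "0 \<le> x \<bullet> (Q *v x)" using \<open>psd Q\<close> unfolding psd_def by blast
  ultimately have "((norm u)\<^sup>2)\<^sup>2 \<le> (norm u)\<^sup>2 * trace (Q ** P) * (x \<bullet> (Q *v x))"
    using psd_quadratic_form_on_range_le_trace[OF assms Pu] by (meson mult_right_mono order_trans)
  then have le: "(norm u)\<^sup>2 * (norm u)\<^sup>2 \<le> (norm u)\<^sup>2 * (trace (Q ** P) * (x \<bullet> (Q *v x)))"
    by (simp only: power2_eq_square[of "(norm u)\<^sup>2"] mult.assoc)
  have "(norm u)\<^sup>2 \<le> trace (Q ** P) * (x \<bullet> (Q *v x))"
  proof (cases "u = 0")
    case True
    have "0 \<le> trace (Q ** P)"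
      using psd_trace_nonneg[OF psd_congruence[OF \<open>psd Q\<close>, of P]]
      by (simp only: trace_symmetric_idempotent_congruence[OF P_sym P_idem])
    with True form_x show ?thesis by simp
  next
    case False
    then have "0 < (norm u)\<^sup>2" by simp
    with le show ?thesis by (rule mult_left_le_imp_le)
  qed
  then show ?thesis by (simp add: u_def)
qed

lemma norm_projector_psd_le:
  fixes P Q :: "real^'n^'n"
  assumes "transpose P = P" and "P ** P = P" and "psd Q" and "loewner_le Q (mat 1)"
    and "trace (Q ** P) \<le> \<delta>\<^sup>2" and "0 \<le> \<delta>"
  shows "norm (P *v (Q *v x)) \<le> \<delta> * norm x"
proof (rule power2_le_imp_le)
  have "(norm (P *v (Q *v x)))\<^sup>2 \<le> trace (Q ** P) * (x \<bullet> (Q *v x))"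
    using assms(1-3) by (rule norm_projector_psd_sq_le_trace)
  also have "\<dots> \<le> \<delta>\<^sup>2 * (norm x)\<^sup>2"
  proof (rule mult_mono)
    show "x \<bullet> (Q *v x) \<le> (norm x)\<^sup>2"
      using assms(4) by (rule loewner_le_id_imp_quadratic_form_le)
    show "0 \<le> x \<bullet> (Q *v x)" using assms(3) unfolding psd_def by blast
  qed (simp_all add: assms(5))
  finally show "(norm (P *v (Q *v x)))\<^sup>2 \<le> (\<delta> * norm x)\<^sup>2"
    by (simp add: power_mult_distrib)
qed (simp add: assms(6))

theorem lemma2:
  fixes Pstar Phat S :: "real^'n^'n" and m :: nat and L :: nat
    and \<beta> :: "nat \<Rightarrow> real^'n" and \<delta> :: real
  assumes "orth_projector Pstar m"
    and "L \<ge> 1"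
    and "Phat \<in> feasible_set m"
    and "\<forall>P \<in> feasible_set m. objective L \<beta> Phat \<le> objective L \<beta> P"
    and "psd S" and "S ** S = Phat"
    and "0 \<le> \<delta>" and "\<delta> < 1"
    and "trace ((mat 1 - Phat) ** Pstar) \<le> \<delta>\<^sup>2"
  shows "\<forall>x :: real^'n. norm (Pstar *v x) \<le> norm (S *v x) + \<delta> * norm x"
proof
  fix x :: "real^'n"
  define Q where "Q = mat 1 - Phat"
  have P_sym: "transpose Pstar = Pstar" and P_idem: "Pstar ** Pstar = Pstar"
    using assms(1) unfolding orth_projector_def by auto
  have "loewner_le 0 Phat" and Phat_le_id: "loewner_le (S ** S) (mat 1)"
    using assms(3,6) unfolding feasible_set_def by auto
  then have "psd Q" and "loewner_le Q (mat 1)"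
    using assms(6) unfolding Q_def loewner_le_def by simp_all
  have "x = S *v (S *v x) + Q *v x"
    by (simp add: Q_def assms(6) matrix_vector_mul_assoc matrix_vector_mult_diff_rdistrib)
  then have split: "Pstar *v x = Pstar *v (S *v (S *v x)) + Pstar *v (Q *v x)"
    by (metis matrix_vector_right_distrib)
  have first: "norm (Pstar *v (S *v (S *v x))) \<le> norm (S *v x)"
    using norm_symmetric_idempotent_matrix_le[OF P_sym P_idem, of "S *v (S *v x)"]
      norm_symmetric_matrix_le_if_square_loewner_le_id[OF _ Phat_le_id, of "S *v x"] assms(5)
    unfolding psd_def by simp
  have second: "norm (Pstar *v (Q *v x)) \<le> \<delta> * norm x"
    using norm_projector_psd_le[OF P_sym P_idem \<open>psd Q\<close> \<open>loewner_le Q (mat 1)\<close>] assms(7,9)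
    by (simp add: Q_def)
  show "norm (Pstar *v x) \<le> norm (S *v x) + \<delta> * norm x"
    using norm_triangle_ineq[of "Pstar *v (S *v (S *v x))" "Pstar *v (Q *v x)"] first second
    unfolding split[symmetric] by linarith
qed

end
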